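(* For each arrival $t\ge 1$ and each level $0\le i\le L^{(t)}+1$, we have $\mathscr{C}^{(t-1)}_{i}\preceq\mathscr{C}^{(t)}_{i}$.
   Context: An offline instance $(\mathcal{M},D)$ consists of demand pairs $D=\{(u_j,v_j)\}$ over a terminal set $V=\{u_j,v_j\}$, each terminal in exactly one pair (the other element of its pair is its mate), and a metric $\mathcal{M}$ on $V$ with all distances at least $1$, viewed as the complete graph on $V$ with edge costs equal to distances. A clustering of $V$ is a partition of $V$; for a clustering $\mathscr{C}$, $\mathcal{M}/\mathscr{C}$ denotes the shortest-path metric on $\mathscr{C}$ of the graph obtained from the complete weighted graph on $V$ by contracting each cluster into a single vertex. For clusterings $\mathscr{C}_1$ of $V_1$ and $\mathscr{C}_2$ of $V_2$, write $\mathscr{C}_1\preceq\mathscr{C}_2$ if every cluster of $\mathscr{C}_1$ is contained in some cluster of $\mathscr{C}_2$. Clustering procedure: ${\sf level}(v)=\lceil\log_2{\sf dist}_{\mathcal{M}}(v,\text{mate of }v)\rceil$, ${\sf level}(C)=\max_{v\in C}{\sf level}(v)$, $L=\max_{v\in V}{\sf level}(v)$. $\mathscr{C}_0$ is the clustering into singletons. For $i=0,\dots,L$: a cluster $C\in\mathscr{C}_i$ is $i$-active if ${\sf level}(C)\ge i$; $H_i$ is the graph whose vertices are the $i$-active clusters of $\mathscr{C}_i$, with an edge between distinct $C_1,C_2$ iff ${\sf dist}_{\mathcal{M}/\mathscr{C}_i}(C_1,C_2)<2^{i+1}$; $\mathscr{C}_{i+1}$ consists of all non-$i$-active clusters of $\mathscr{C}_i$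 together with, for each connected component $Q$ of $H_i$, the union of the clusters in $Q$. Online setting: pairs $(u^{(1)},v^{(1)}),\dots,(u^{(n)},v^{(n)})$ arrive in order; for $1\le t\le n$ the instance $(\mathcal{M}^{(t)},D^{(t)})$ consists of the first $t$ pairs and the restriction of the metric to their terminals $V^{(t)}$. Running the procedure on it yields $L^{(t)}$, $\mathscr{C}^{(t)}_i$, $H^{(t)}_i$; for $i\ge L^{(t)}+1$ set $\mathscr{C}^{(t)}_i:=\mathscr{C}^{(t)}_{L^{(t)}+1}$ and $H^{(t)}_i$ empty. For $t=0$, $L^{(0)}=0$ and every $\mathscr{C}^{(0)}_i$ and $H^{(0)}_i$ is empty. *)

theory Defs
  imports Complex_Main
begin

definition terms :: "('a \<times> 'a) list \<Rightarrow> 'a set" where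
  "terms ps = (\<Union>(u,v)\<in>set ps. {u, v})"

text \<open>Each terminal lies in exactly one pair (all listed terminals are distinct).\<close>
definition valid_pairs :: "('a \<times> 'a) list \<Rightarrow> bool" where
  "valid_pairs ps = distinct (concat (map (\<lambda>(u,v). [u, v]) ps))"

definition metric_on :: "'a set \<Rightarrow> ('a \<Rightarrow> 'a \<Rightarrow> real) \<Rightarrow> bool" where
  "metric_on V d = ((\<forall>x\<in>V. d x x = 0) \<and> (\<forall>x\<in>V. \<forall>y\<in>V. d x y = d y x)
     \<and> (\<forall>x\<in>V. \<forall>y\<in>V. \<forall>z\<in>V. d x z \<le> d x y + d y z)
     \<and> (\<forall>x\<in>V. \<forall>y\<in>V. x \<noteq> y \<longrightarrow> 1 \<le> d x y))"

definition mate :: "('a \<times> 'a) list \<Rightarrow> 'a \<Rightarrow> 'a" where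
  "mate ps x = (SOME y. (x, y) \<in> set ps \<or> (y, x) \<in> set ps)"

definition lvl :: "('a \<times> 'a) list \<Rightarrow> ('a \<Rightarrow> 'a \<Rightarrow> real) \<Rightarrow> 'a \<Rightarrow> int" where
  "lvl ps d v = \<lceil>log 2 (d v (mate ps v))\<rceil>"

definition clvl :: "('a \<times> 'a) list \<Rightarrow> ('a \<Rightarrow> 'a \<Rightarrow> real) \<Rightarrow> 'a set \<Rightarrow> int" where
  "clvl ps d C = Max (lvl ps d ` C)"

definition Lmax :: "('a \<times> 'a) list \<Rightarrow> ('a \<Rightarrow> 'a \<Rightarrow> real) \<Rightarrow> int" where
  "Lmax ps d = Max (lvl ps d ` terms ps)"

text \<open>Weight of the (contracted) edge between two clusters: cheapest edge between them.\<close>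
definition clw :: "('a \<Rightarrow> 'a \<Rightarrow> real) \<Rightarrow> 'a set \<Rightarrow> 'a set \<Rightarrow> real" where
  "clw d X Y = Min {d x y | x y. x \<in> X \<and> y \<in> Y}"

text \<open>Shortest-path metric M/Cl on the clusters of the clustering Cl.\<close>
definition cdist :: "('a \<Rightarrow> 'a \<Rightarrow> real) \<Rightarrow> 'a set set \<Rightarrow> 'a set \<Rightarrow> 'a set \<Rightarrow> real" where
  "cdist d Cl A B = Inf {sum_list (map2 (clw d) (A # ps) (ps @ [B])) | ps. set ps \<subseteq> Cl}"

definition active :: "('a \<times> 'a) list \<Rightarrow> ('a \<Rightarrow> 'a \<Rightarrow> real) \<Rightarrow> nat \<Rightarrow> 'a set \<Rightarrow> bool" where
  "active ps d i C = (clvl ps d C \<ge> int i)"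

definition Hrel :: "('a \<times> 'a) list \<Rightarrow> ('a \<Rightarrow> 'a \<Rightarrow> real) \<Rightarrow> nat \<Rightarrow> 'a set set \<Rightarrow> ('a set \<times> 'a set) set" where
  "Hrel ps d i Cl = {(A, B). A \<in> Cl \<and> B \<in> Cl \<and> active ps d i A \<and> active ps d i B \<and> A \<noteq> B
                      \<and> cdist d Cl A B < (2::real) ^ (i + 1)}"

definition step :: "('a \<times> 'a) list \<Rightarrow> ('a \<Rightarrow> 'a \<Rightarrow> real) \<Rightarrow> nat \<Rightarrow> 'a set set \<Rightarrow> 'a set set" where
  "step ps d i Cl = {C \<in> Cl. \<not> active ps d i C}
     \<union> {\<Union> {C'. C' \<in> Cl \<and> active ps d i C' \<and> (C, C') \<in> (Hrel ps d i Cl)\<^sup>*} | C. C \<in> Cl \<and> active ps d i C}"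

primrec clus :: "('a \<times> 'a) list \<Rightarrow> ('a \<Rightarrow> 'a \<Rightarrow> real) \<Rightarrow> nat \<Rightarrow> 'a set set" where
  "clus ps d 0 = {{v} | v. v \<in> terms ps}"
| "clus ps d (Suc i) = step ps d i (clus ps d i)"

text \<open>Online quantities L^(t) and C^(t)_i for the first t pairs (with the conventions for t = 0
  and for i \<ge> L^(t)+1).\<close>
definition Lon :: "('a \<times> 'a) list \<Rightarrow> ('a \<Rightarrow> 'a \<Rightarrow> real) \<Rightarrow> nat \<Rightarrow> int" where
  "Lon ps d t = (if t = 0 then 0 else Lmax (take t ps) d)"

definition Con :: "('a \<times> 'a) list \<Rightarrow> ('a \<Rightarrow> 'a \<Rightarrow> real) \<Rightarrow> nat \<Rightarrow> nat \<Rightarrow> 'a set set" where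
  "Con ps d t i = (if t = 0 then {}
     else clus (take t ps) d (min i (nat (Lmax (take t ps) d) + 1)))"

definition refines :: "'a set set \<Rightarrow> 'a set set \<Rightarrow> bool" where
  "refines A B = (\<forall>X\<in>A. \<exists>Y\<in>B. X \<subseteq> Y)"

end

theory Submission
  imports Defs
begin

text \<open>By induction on the level i, every cluster C of the clustering for a prefix of the
  demand pairs lies in a cluster f C of the clustering for the whole list. Levels of old terminals
  are unchanged because their mates are, so f sends active clusters to active clusters; and
  distances in the contracted metric can only shrink when the clusters grow, so every edge of the
  old graph H_i becomes an edge or a loop of the new one. Thus each connected component is mapped
  into a connected component. Finally C^(t-1)_i is the clustering of the first t - 1 pairs at
  some level j \<le> i, and clusterings only coarsen as the level increases.\<close>

lemma finite_terms: "finite (terms ps)"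
  unfolding terms_def by auto

lemma terms_take_subset: "terms (take n ps) \<subseteq> terms ps"
  unfolding terms_def by (auto dest: in_set_takeD)

lemma metric_on_nonneg: "metric_on V d \<Longrightarrow> x \<in> V \<Longrightarrow> y \<in> V \<Longrightarrow> 0 \<le> d x y"
  unfolding metric_on_def by (cases "x = y") force+

lemma valid_pairs_take: "valid_pairs ps \<Longrightarrow> valid_pairs (take n ps)"
  unfolding valid_pairs_def
  by (metis append_take_drop_id concat_append distinct_append map_append)

lemma valid_pairs_disjoint:
  assumes "valid_pairs ps" "(a, b) \<in> set ps" "(c, e) \<in> set ps" "(a, b) \<noteq> (c, e)"
  shows "{a, b} \<inter> {c, e} = {}"
proof -
  have "[a, b] \<noteq> [c, e]" using assms(4) by simp
  then show ?thesis
    using assms(1-3) unfolding valid_pairs_def distinct_concat_iff by fastforce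
qed

lemma valid_pairs_neq: "valid_pairs ps \<Longrightarrow> (a, b) \<in> set ps \<Longrightarrow> a \<noteq> b"
  unfolding valid_pairs_def distinct_concat_iff by fastforce

lemma mate_eqI:
  assumes vp: "valid_pairs ps" and y: "(v, y) \<in> set ps \<or> (y, v) \<in> set ps"
  shows "mate ps v = y"
  unfolding mate_def
proof (rule some_equality)
  fix y' assume "(v, y') \<in> set ps \<or> (y', v) \<in> set ps"
  with y show "y' = y"
    using valid_pairs_disjoint[OF vp] valid_pairs_neq[OF vp] by blast
qed (rule y)

lemma mate_take:
  assumes "valid_pairs ps" "v \<in> terms (take n ps)"
  shows "mate (take n ps) v = mate ps v"
proof -
  obtain y where y: "(v, y) \<in> set (take n ps) \<or> (y, v) \<in> set (take n ps)"
    using assms(2) unfolding terms_def by auto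
  then have "mate (take n ps) v = y"
    by (rule mate_eqI[OF valid_pairs_take[OF assms(1)]])
  moreover have "mate ps v = y"
    using y by (intro mate_eqI[OF assms(1)]) (auto dest: in_set_takeD)
  ultimately show ?thesis by simp
qed

lemma lvl_take: "valid_pairs ps \<Longrightarrow> v \<in> terms (take n ps) \<Longrightarrow> lvl (take n ps) d v = lvl ps d v"
  unfolding lvl_def by (simp add: mate_take)

lemma active_take_mono:
  assumes "valid_pairs ps" "active (take n ps) d i C"
    and "C \<subseteq> terms (take n ps)" "C \<noteq> {}" "C \<subseteq> D" "finite D"
  shows "active ps d i D"
proof -
  have "lvl (take n ps) d ` C = lvl ps d ` C"
    using lvl_take[OF assms(1)] assms(3) by (intro image_cong) auto
  then have "clvl (take n ps) d C = Max (lvl ps d ` C)"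
    unfolding clvl_def by simp
  also have "\<dots> \<le> clvl ps d D"
    unfolding clvl_def using assms(4-6) by (intro Max_mono image_mono) auto
  finally show ?thesis using assms(2) unfolding active_def by linarith
qed

lemma refines_refl: "refines A A"
  unfolding refines_def by blast

lemma refines_trans: "refines A B \<Longrightarrow> refines B C \<Longrightarrow> refines A C"
  unfolding refines_def by (meson order_trans)

lemma refines_step: "refines Cl (step ps d i Cl)"
  unfolding refines_def
proof
  fix C assume C: "C \<in> Cl"
  show "\<exists>Y\<in>step ps d i Cl. C \<subseteq> Y"
  proof (cases "active ps d i C")
    case False then show ?thesis using C unfolding step_def by blast
  next
    case True
    let ?Y = "\<Union> {C'. C' \<in> Cl \<and> active ps d i C' \<and> (C, C') \<in> (Hrel ps d i Cl)\<^sup>*}"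
    have "?Y \<in> step ps d i Cl" using C True unfolding step_def by blast
    moreover have "C \<subseteq> ?Y" using C True by blast
    ultimately show ?thesis by blast
  qed
qed

lemma refines_clus_le: "i \<le> j \<Longrightarrow> refines (clus ps d i) (clus ps d j)"
proof (induction j rule: dec_induct)
  case base then show ?case by (rule refines_refl)
next
  case (step j)
  then show ?case using refines_trans[OF step.IH refines_step] by simp
qed

lemma clus_nonempty_subset_terms: "\<forall>C\<in>clus ps d i. C \<noteq> {} \<and> C \<subseteq> terms ps"
proof (induction i)
  case 0 then show ?case by auto
next
  case (Suc i)
  show ?case
  proof
    fix C assume "C \<in> clus ps d (Suc i)"
    then have "C \<in> step ps d i (clus ps d i)" by simp
    then show "C \<noteq> {} \<and> C \<subseteq> terms ps"
      unfolding step_def using Suc.IH by blast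
  qed
qed

lemma finite_clw_set: "finite X \<Longrightarrow> finite Y \<Longrightarrow> finite {d x y | x y. x \<in> X \<and> y \<in> Y}"
  by (rule finite_image_set2) simp_all

lemma clw_antimono:
  assumes "X \<subseteq> X'" "Y \<subseteq> Y'" "X \<noteq> {}" "Y \<noteq> {}" "finite X'" "finite Y'"
  shows "clw d X' Y' \<le> clw d X Y"
  unfolding clw_def using assms finite_clw_set[of X' Y' d] by (intro Min_antimono) blast+

lemma clw_nonneg:
  assumes "X \<subseteq> V" "Y \<subseteq> V" "X \<noteq> {}" "Y \<noteq> {}" "finite X" "finite Y"
    and "\<forall>x\<in>V. \<forall>y\<in>V. 0 \<le> d x y"
  shows "0 \<le> clw d X Y"
  unfolding clw_def using assms finite_clw_set[of X Y d] by (intro Min.boundedI) blast+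

lemma sum_list_map2_clw_antimono:
  assumes f: "\<forall>C\<in>Cl1. f C \<in> Cl2 \<and> C \<subseteq> f C" and "\<forall>C\<in>Cl1. C \<noteq> {}" "\<forall>C\<in>Cl2. finite C"
    and "set xs \<subseteq> Cl1" "set ys \<subseteq> Cl1"
  shows "sum_list (map2 (clw d) (map f xs) (map f ys)) \<le> sum_list (map2 (clw d) xs ys)"
proof -
  have "clw d (f x) (f y) \<le> clw d x y" if "(x, y) \<in> set (zip xs ys)" for x y
  proof -
    have "x \<in> Cl1" "y \<in> Cl1"
      using that assms(4,5) by (auto dest: set_zip_leftD set_zip_rightD)
    then show ?thesis using assms(1-3) by (intro clw_antimono) auto
  qed
  then show ?thesis
    unfolding zip_map_map map_map by (intro sum_list_mono) auto
qed

lemma sum_list_map2_clw_nonneg: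
  assumes "\<forall>C\<in>Cl. finite C \<and> C \<subseteq> V \<and> C \<noteq> {}" "\<forall>x\<in>V. \<forall>y\<in>V. 0 \<le> d x y"
    and "set xs \<subseteq> Cl" "set ys \<subseteq> Cl"
  shows "0 \<le> sum_list (map2 (clw d) xs ys)"
proof (rule sum_list_nonneg)
  fix z assume "z \<in> set (map2 (clw d) xs ys)"
  then obtain x y where xy: "(x, y) \<in> set (zip xs ys)" and z: "z = clw d x y" by auto
  have "x \<in> Cl" "y \<in> Cl"
    using xy assms(3,4) by (auto dest: set_zip_leftD set_zip_rightD)
  then show "0 \<le> z"
    unfolding z using assms(1,2) by (intro clw_nonneg[of x V y]) auto
qed

lemma cdist_antimono:
  assumes f: "\<forall>C\<in>Cl1. f C \<in> Cl2 \<and> C \<subseteq> f C" and ne1: "\<forall>C\<in>Cl1. C \<noteq> {}"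
    and c2: "\<forall>C\<in>Cl2. finite C \<and> C \<subseteq> V \<and> C \<noteq> {}" and nn: "\<forall>x\<in>V. \<forall>y\<in>V. 0 \<le> d x y"
    and AB: "A \<in> Cl1" "B \<in> Cl1"
  shows "cdist d Cl2 (f A) (f B) \<le> cdist d Cl1 A B"
  unfolding cdist_def
proof (rule cInf_mono)
  show "{sum_list (map2 (clw d) (A # ps) (ps @ [B])) | ps. set ps \<subseteq> Cl1} \<noteq> {}"
    by (auto intro!: exI[of _ "[]"])
next
  show "bdd_below {sum_list (map2 (clw d) (f A # ps) (ps @ [f B])) | ps. set ps \<subseteq> Cl2}"
    using sum_list_map2_clw_nonneg[OF c2 nn] f AB by (intro bdd_belowI[of _ 0]) auto
next
  fix b assume "b \<in> {sum_list (map2 (clw d) (A # ps) (ps @ [B])) | ps. set ps \<subseteq> Cl1}"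
  then obtain ps where ps: "set ps \<subseteq> Cl1" "b = sum_list (map2 (clw d) (A # ps) (ps @ [B]))"
    by auto
  have "sum_list (map2 (clw d) (f A # map f ps) (map f ps @ [f B])) \<le> b"
    using sum_list_map2_clw_antimono[OF f ne1, of "A # ps" "ps @ [B]" d] c2 ps AB by auto
  moreover have "set (map f ps) \<subseteq> Cl2" using ps f by auto
  ultimately show "\<exists>a\<in>{sum_list (map2 (clw d) (f A # ps) (ps @ [f B])) | ps. set ps \<subseteq> Cl2}. a \<le> b"
    by blast
qed

lemma rtrancl_Hrel_map:
  assumes f: "\<forall>C\<in>Cl1. f C \<in> Cl2 \<and> C \<subseteq> f C" and ne1: "\<forall>C\<in>Cl1. C \<noteq> {}"
    and c2: "\<forall>C\<in>Cl2. finite C \<and> C \<subseteq> V \<and> C \<noteq> {}" and nn: "\<forall>x\<in>V. \<forall>y\<in>V. 0 \<le> d x y"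
    and act: "\<And>C. C \<in> Cl1 \<Longrightarrow> active ps1 d i C \<Longrightarrow> active ps2 d i (f C)"
    and path: "(C, C') \<in> (Hrel ps1 d i Cl1)\<^sup>*"
  shows "(f C, f C') \<in> (Hrel ps2 d i Cl2)\<^sup>*"
  using path
proof (induction rule: rtrancl_induct)
  case base then show ?case by simp
next
  case (step D D')
  have D: "D \<in> Cl1" "D' \<in> Cl1" "active ps1 d i D" "active ps1 d i D'"
    and near: "cdist d Cl1 D D' < 2 ^ (i + 1)"
    using step.hyps(2) unfolding Hrel_def by auto
  have "(f D, f D') \<in> (Hrel ps2 d i Cl2)\<^sup>="
  proof (cases "f D = f D'")
    case False
    have "cdist d Cl2 (f D) (f D') \<le> cdist d Cl1 D D'"
      using cdist_antimono[OF f ne1 c2 nn D(1,2)] .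
    then show ?thesis
      unfolding Hrel_def using False near D f act by auto
  qed simp
  with step.IH show ?case by auto
qed

lemma step_mono:
  assumes ref: "refines Cl1 Cl2" and ne1: "\<forall>C\<in>Cl1. C \<noteq> {}"
    and c2: "\<forall>C\<in>Cl2. finite C \<and> C \<subseteq> V \<and> C \<noteq> {}" and nn: "\<forall>x\<in>V. \<forall>y\<in>V. 0 \<le> d x y"
    and act: "\<And>C D. C \<in> Cl1 \<Longrightarrow> D \<in> Cl2 \<Longrightarrow> C \<subseteq> D \<Longrightarrow> active ps1 d i C \<Longrightarrow> active ps2 d i D"
  shows "refines (step ps1 d i Cl1) (step ps2 d i Cl2)"
  unfolding refines_def
proof
  obtain f where f: "\<forall>C\<in>Cl1. f C \<in> Cl2 \<and> C \<subseteq> f C"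
    using ref unfolding refines_def by metis
  have act_f: "active ps2 d i (f C)" if "C \<in> Cl1" "active ps1 d i C" for C
    using that f act by blast
  fix X assume X: "X \<in> step ps1 d i Cl1"
  show "\<exists>Y\<in>step ps2 d i Cl2. X \<subseteq> Y"
  proof (cases "X \<in> Cl1 \<and> \<not> active ps1 d i X")
    case True
    then have "f X \<in> Cl2" "X \<subseteq> f X" using f by auto
    with refines_step[of Cl2 ps2 d i] show ?thesis
      unfolding refines_def by (meson order_trans)
  next
    case False
    then obtain C where C: "C \<in> Cl1" "active ps1 d i C"
      and X_eq: "X = \<Union> {C'. C' \<in> Cl1 \<and> active ps1 d i C' \<and> (C, C') \<in> (Hrel ps1 d i Cl1)\<^sup>*}"
      using X unfolding step_def by blast
    let ?Y = "\<Union> {D'. D' \<in> Cl2 \<and> active ps2 d i D' \<and> (f C, D') \<in> (Hrel ps2 d i Cl2)\<^sup>*}"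
    have "?Y \<in> step ps2 d i Cl2"
      unfolding step_def using C f act_f by blast
    moreover have "X \<subseteq> ?Y"
    proof
      fix x assume "x \<in> X"
      then obtain C' where C': "C' \<in> Cl1" "active ps1 d i C'"
        "(C, C') \<in> (Hrel ps1 d i Cl1)\<^sup>*" "x \<in> C'"
        unfolding X_eq by blast
      then have "(f C, f C') \<in> (Hrel ps2 d i Cl2)\<^sup>*"
        using rtrancl_Hrel_map[OF f ne1 c2 nn act_f] by blast
      with C' f act_f show "x \<in> ?Y" by blast
    qed
    ultimately show ?thesis by blast
  qed
qed

lemma refines_clus_take:
  assumes vp: "valid_pairs ps" and nn: "\<forall>x\<in>terms ps. \<forall>y\<in>terms ps. 0 \<le> d x y"
  shows "refines (clus (take n ps) d i) (clus ps d i)"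
proof (induction i)
  case 0
  show ?case unfolding refines_def using terms_take_subset[of n ps] by auto
next
  case (Suc i)
  have ne1: "\<forall>C\<in>clus (take n ps) d i. C \<noteq> {}"
    using clus_nonempty_subset_terms[of "take n ps" d i] by blast
  have c2: "\<forall>C\<in>clus ps d i. finite C \<and> C \<subseteq> terms ps \<and> C \<noteq> {}"
    using clus_nonempty_subset_terms[of ps d i] by (auto intro: finite_subset[OF _ finite_terms])
  have act: "active ps d i D"
    if "C \<in> clus (take n ps) d i" "D \<in> clus ps d i" "C \<subseteq> D" "active (take n ps) d i C" for C D
    using that c2 clus_nonempty_subset_terms[of "take n ps" d i]
    by (intro active_take_mono[OF vp, of n d i C]) auto
  show ?case
    using step_mono[OF Suc.IH ne1 c2 nn act] by simp
qed

theorem lemma4p2: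
  fixes ps :: "('a \<times> 'a) list" and d :: "'a \<Rightarrow> 'a \<Rightarrow> real" and t i :: nat
  assumes "valid_pairs ps"
    and "metric_on (terms ps) d"
    and "1 \<le> t" and "t \<le> length ps"
    and "int i \<le> Lon ps d t + 1"
  shows "refines (Con ps d (t - 1) i) (Con ps d t i)"
proof (cases "t = 1")
  case True
  then show ?thesis unfolding Con_def refines_def by simp
next
  case False
  let ?ps = "take t ps"
  define j where "j = min i (nat (Lmax (take (t - 1) ps) d) + 1)"
  have prev: "Con ps d (t - 1) i = clus (take (t - 1) ?ps) d j"
    unfolding Con_def j_def using False assms(3) by simp
  have "int i \<le> Lmax ?ps d + 1"
    using assms(3,5) unfolding Lon_def by simp
  then have "min i (nat (Lmax ?ps d) + 1) = i"
    by linarith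
  then have cur: "Con ps d t i = clus ?ps d i"
    unfolding Con_def using assms(3) by simp
  have nn: "\<forall>x\<in>terms ?ps. \<forall>y\<in>terms ?ps. 0 \<le> d x y"
    using metric_on_nonneg[OF assms(2)] terms_take_subset[of t ps] by (auto simp: subset_iff)
  have "refines (clus (take (t - 1) ?ps) d j) (clus ?ps d j)"
    using refines_clus_take[OF valid_pairs_take[OF assms(1)] nn] .
  moreover have "refines (clus ?ps d j) (clus ?ps d i)"
    by (rule refines_clus_le) (simp add: j_def)
  ultimately show ?thesis unfolding prev cur by (rule refines_trans)
qed

end
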